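(* Let $m\ge3$ be an integer, $\beta=\frac{m+\sqrt{m^2-4}}{2}$, $\alpha=1/\beta$, and let $\mathbf U=(U_k)$ be given by $U_{-1}=0$, $U_0=1$, $U_{k+1}=mU_k-U_{k-1}$. Let $n\ge1$ with $(n)_{\mathbf U}=a_Na_{N-1}\cdots a_1a_0$, let $b_0$ be the last digit of $(n+1)_{\mathbf U}$, and let $\Delta P_\alpha(n)=P_\alpha(n+1)-P_\alpha(n)$. Then: (i) if $b_0=0$, the string $a_Na_{N-1}\cdots a_1$ is the $\mathbf U$-expansion of $n+\Delta P_\alpha(n)-1$; (ii) if $b_0\ne0$, the string $a_Na_{N-1}\cdots a_1$ is the $\mathbf U$-expansion of $\Delta P_\alpha(n)-1$. (Here the empty string is the $\mathbf U$-expansion of $0$.)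
   Context: $\mathbf U$-expansion: for $n\ge1$, $(n)_{\mathbf U}=a_N\cdots a_0$ is the unique string of non-negative integers with $a_N\ne0$, $n=\sum_{k=0}^N a_kU_k$ and $\sum_{k=0}^i a_kU_k<U_{i+1}$ for all $i\le N$ (the greedy representation); the expansion of $0$ is the empty word. For irrational $\alpha\in(0,1)$, $P_\alpha(n)$ denotes the number of factors $u$ of length $n$ of a Sturmian sequence (aperiodic binary sequence in which any two factors of equal length differ by at most $1$ in the number of occurrences of each letter) over $\{a,b\}$ with frequency of $b$ equal to $\alpha$ such that $(|u|_a,|u|_b)=(\lfloor(1-\alpha)n\rfloor,\lceil n\alpha\rceil)$; equivalently $P_\alpha(n)=\#\{k\in\{1,\dots,n\}:\{k\alpha\}\le\{n\alpha\}\}$. *)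

theory Defs
  imports Complex_Main
begin

text \<open>The sequence U with U_{-1} = 0, U_0 = 1, U_{k+1} = m U_k - U_{k-1};
  here seqU m k = U_k for k \<ge> 0 (so seqU m 1 = m).\<close>
fun seqU :: "nat \<Rightarrow> nat \<Rightarrow> int" where
  "seqU m 0 = 1"
| "seqU m (Suc 0) = int m"
| "seqU m (Suc (Suc k)) = int m * seqU m (Suc k) - seqU m k"

text \<open>A digit string a_N ... a_0 is stored least significant digit first:
  the list ds with ds ! k = a_k.  The empty list is the expansion of 0.\<close>
definition is_Uexp :: "nat \<Rightarrow> nat list \<Rightarrow> nat \<Rightarrow> bool" where
  "is_Uexp m ds n \<longleftrightarrow>
     (ds \<noteq> [] \<longrightarrow> last ds \<noteq> 0) \<and>
     int n = (\<Sum>k<length ds. int (ds ! k) * seqU m k) \<and>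
     (\<forall>i<length ds. (\<Sum>k\<le>i. int (ds ! k) * seqU m k) < seqU m (Suc i))"

definition Uexp :: "nat \<Rightarrow> nat \<Rightarrow> nat list" where
  "Uexp m n = (THE ds. is_Uexp m ds n)"

definition Pa :: "real \<Rightarrow> nat \<Rightarrow> nat" where
  "Pa \<alpha> n = card {k \<in> {1..n}. frac (real k * \<alpha>) \<le> frac (real n * \<alpha>)}"

end

theory Submission
  imports Defs
begin

text \<open>
  Since U_(k+1) * alpha = U_k + alpha^(k+2), multiplying n = sum_k a_k U_k by alpha gives
  n * alpha = sum_(k>=1) a_k U_(k-1) + sum_k a_k alpha^(k+1), and for greedy digits the second sum
  lies in [0, 1). Hence floor (n * alpha) has the expansion a_N ... a_1, and
  frac (n * alpha) < alpha exactly when a_0 = 0.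
  On the Sturmian side, frac ((j+1) alpha) <= frac ((n+1) alpha) agrees with
  frac (j alpha) <= frac (n alpha) up to the carries [frac (j alpha) + alpha >= 1] and
  [frac (n alpha) + alpha >= 1]; summing over j gives
  Delta P(n) = 1 + floor (n alpha) - n [frac (n alpha) + alpha >= 1], and the carry at n happens
  exactly when frac ((n+1) alpha) < alpha, i.e. when b_0 = 0.
\<close>

section \<open>Greedy U-representations\<close>

lemma seqU_pos_less_Suc:
  assumes "2 \<le> m"
  shows "0 < seqU m k \<and> seqU m k < seqU m (Suc k)"
proof (induction k)
  case 0
  then show ?case using assms by simp
next
  case (Suc k)
  have "2 * seqU m (Suc k) \<le> int m * seqU m (Suc k)"
    using assms Suc by (intro mult_right_mono) auto
  moreover have "seqU m (Suc (Suc k)) = int m * seqU m (Suc k) - seqU m k"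
    by simp
  ultimately show ?case using Suc by linarith
qed

lemma seqU_pos: "2 \<le> m \<Longrightarrow> 0 < seqU m k"
  using seqU_pos_less_Suc by blast

lemma strict_mono_seqU: "2 \<le> m \<Longrightarrow> strict_mono (seqU m)"
  using seqU_pos_less_Suc by (simp add: strict_mono_Suc_iff)

lemma seqU_Suc_le: "2 \<le> m \<Longrightarrow> seqU m (Suc k) \<le> int m * seqU m k"
  using seqU_pos[of m "k - 1"] by (cases k) auto

lemma of_nat_less_seqU: "2 \<le> m \<Longrightarrow> int k < seqU m k"
proof (induction k)
  case (Suc k)
  then show ?case using seqU_pos_less_Suc[of m k] by simp
qed simp

lemma seqU_bracket:
  assumes "2 \<le> m" and "1 \<le> n"
  obtains N where "seqU m N \<le> int n" and "int n < seqU m (Suc N)"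
proof -
  define K where "K = (LEAST k. int n < seqU m k)"
  have "int n < seqU m K"
    unfolding K_def using of_nat_less_seqU[OF assms(1)] by (rule LeastI)
  moreover have "K \<noteq> 0"
  proof
    assume "K = 0"
    with \<open>int n < seqU m K\<close> assms(2) show False by simp
  qed
  moreover have "\<not> int n < seqU m (K - 1)"
    unfolding K_def by (rule not_less_Least) (use \<open>K \<noteq> 0\<close> in \<open>simp add: K_def\<close>)
  ultimately show ?thesis using that[of "K - 1"] by auto
qed

text \<open>Digit strings are handled as functions, so that d \<circ> Suc drops the last digit a_0.\<close>

definition Uval :: "nat \<Rightarrow> (nat \<Rightarrow> nat) \<Rightarrow> nat \<Rightarrow> int" where
  "Uval m d N = (\<Sum>k<N. int (d k) * seqU m k)"

definition greedy :: "nat \<Rightarrow> (nat \<Rightarrow> nat) \<Rightarrow> nat \<Rightarrow> bool" where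
  "greedy m d N \<longleftrightarrow> (\<forall>i<N. Uval m d (Suc i) < seqU m (Suc i))"

lemma Uval_0 [simp]: "Uval m d 0 = 0"
  by (simp add: Uval_def)

lemma Uval_Suc: "Uval m d (Suc N) = Uval m d N + int (d N) * seqU m N"
  by (simp add: Uval_def)

lemma Uval_nonneg: "2 \<le> m \<Longrightarrow> 0 \<le> Uval m d N"
  unfolding Uval_def using seqU_pos by (intro sum_nonneg) (simp add: less_imp_le)

lemma Uval_cong: "(\<And>k. k < N \<Longrightarrow> d k = e k) \<Longrightarrow> Uval m d N = Uval m e N"
  unfolding Uval_def by (intro sum.cong) auto

lemma greedy_cong:
  assumes "\<And>k. k < N \<Longrightarrow> d k = e k"
  shows "greedy m d N = greedy m e N"
proof -
  have "Uval m d (Suc i) = Uval m e (Suc i)" if "i < N" for i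
    using assms that by (intro Uval_cong) auto
  then show ?thesis by (auto simp: greedy_def)
qed

lemma greedy_Suc: "greedy m d (Suc N) \<longleftrightarrow> greedy m d N \<and> Uval m d (Suc N) < seqU m (Suc N)"
  by (auto simp: greedy_def less_Suc_eq)

lemma greedy_Uval_less: "greedy m d N \<Longrightarrow> Uval m d N < seqU m N"
  by (cases N) (auto simp: greedy_def)

lemma Uval_zero_digits:
  assumes "L \<le> N" and "\<And>k. L \<le> k \<Longrightarrow> k < N \<Longrightarrow> d k = 0"
  shows "Uval m d N = Uval m d L"
  using assms by (induction N rule: dec_induct) (auto simp: Uval_Suc)

lemma greedy_zero_digits:
  assumes "2 \<le> m" and "greedy m d L" and "L \<le> N" and zero: "\<And>k. L \<le> k \<Longrightarrow> k < N \<Longrightarrow> d k = 0"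
  shows "greedy m d N"
  unfolding greedy_def
proof (intro allI impI)
  fix i assume "i < N"
  show "Uval m d (Suc i) < seqU m (Suc i)"
  proof (cases "Suc i \<le> L")
    case True
    then show ?thesis using \<open>greedy m d L\<close> by (simp add: greedy_def)
  next
    case False
    have "Uval m d (Suc i) = Uval m d L"
      using False \<open>i < N\<close> zero by (intro Uval_zero_digits) auto
    also have "\<dots> < seqU m L"
      using \<open>greedy m d L\<close> by (rule greedy_Uval_less)
    also have "\<dots> \<le> seqU m (Suc i)"
      using False by (simp add: strict_mono_less_eq[OF strict_mono_seqU[OF assms(1)]])
    finally show ?thesis .
  qed
qed

lemma top_digit_le:
  assumes "2 \<le> m" and "Uval m d (Suc N) < seqU m (Suc N) - (int k - 1) * seqU m N"
  shows "d N + k \<le> m"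
proof -
  have "int (d N) * seqU m N + (int k - 1) * seqU m N < int m * seqU m N"
    using assms(2) Uval_nonneg[OF assms(1), of d N] seqU_Suc_le[OF assms(1), of N]
    by (simp add: Uval_Suc)
  then have "int (d N) * seqU m N < (int m - int k + 1) * seqU m N"
    by (simp add: algebra_simps)
  then show ?thesis
    using seqU_pos[OF assms(1), of N] mult_less_cancel_right_pos by fastforce
qed

lemma is_Uexp_iff:
  "is_Uexp m ds n \<longleftrightarrow> (ds \<noteq> [] \<longrightarrow> last ds \<noteq> 0) \<and> int n = Uval m (nth ds) (length ds)
     \<and> greedy m (nth ds) (length ds)"
  unfolding is_Uexp_def Uval_def greedy_def by (simp add: lessThan_Suc_atMost)

lemma is_Uexp_map_upt:
  assumes "greedy m f N" and "int n = Uval m f N" and "0 < N \<Longrightarrow> f (N - 1) \<noteq> 0"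
  shows "is_Uexp m (map f [0..<N]) n"
proof -
  have nth: "map f [0..<N] ! k = f k" if "k < N" for k
    using that by simp
  have "Uval m (nth (map f [0..<N])) N = Uval m f N"
    using nth by (rule Uval_cong)
  moreover have "greedy m (nth (map f [0..<N])) N = greedy m f N"
    using nth by (rule greedy_cong)
  moreover have "map f [0..<N] \<noteq> [] \<Longrightarrow> last (map f [0..<N]) \<noteq> 0"
    using assms(3) by (simp add: last_map)
  ultimately show ?thesis
    using assms by (simp add: is_Uexp_iff)
qed

lemma seqU_le_of_is_Uexp:
  assumes "2 \<le> m" and "is_Uexp m ds n" and "ds \<noteq> []"
  shows "seqU m (length ds - 1) \<le> int n"
proof -
  obtain M where len: "length ds = Suc M" using \<open>ds \<noteq> []\<close> by (cases ds) auto
  have "1 \<le> ds ! M"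
    using assms len by (simp add: is_Uexp_iff last_conv_nth)
  then have "seqU m M \<le> int (ds ! M) * seqU m M"
    using seqU_pos[OF assms(1)] by simp
  also have "\<dots> \<le> Uval m (nth ds) (Suc M)"
    using Uval_nonneg[OF assms(1)] by (simp add: Uval_Suc)
  finally show ?thesis using assms(2) len by (simp add: is_Uexp_iff)
qed

lemma is_Uexp_Nil_iff:
  assumes "2 \<le> m" and "is_Uexp m ds n"
  shows "ds = [] \<longleftrightarrow> n = 0"
proof
  assume "ds = []"
  then show "n = 0" using assms(2) by (simp add: is_Uexp_iff)
next
  assume "n = 0"
  show "ds = []"
  proof (rule ccontr)
    assume "ds \<noteq> []"
    from seqU_le_of_is_Uexp[OF assms this] seqU_pos[OF assms(1), of "length ds - 1"] \<open>n = 0\<close>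
    show False by simp
  qed
qed

lemma length_le_of_is_Uexp:
  assumes "2 \<le> m" and "is_Uexp m ds n" and "int n < seqU m N"
  shows "length ds \<le> N"
proof (cases "ds = []")
  case False
  have "seqU m (length ds - 1) < seqU m N"
    using seqU_le_of_is_Uexp[OF assms(1,2) False] assms(3) by simp
  then show ?thesis
    using False strict_mono_seqU[OF assms(1)] by (simp add: strict_mono_less)
qed simp

lemma is_Uexp_top_digit:
  assumes "2 \<le> m" and es: "is_Uexp m es r" and "length es \<le> N" and "0 < q"
    and n: "int n = int r + int q * seqU m N" and "int n < seqU m (Suc N)"
  shows "is_Uexp m (map (\<lambda>k. if k < length es then es ! k else if k = N then q else 0) [0..<Suc N]) n"
    (is "is_Uexp m (map ?f _) n")
proof -
  have agree: "?f k = es ! k" if "k < length es" for k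
    using that by simp
  have G: "greedy m ?f (length es)" and V: "Uval m ?f (length es) = int r"
    using es greedy_cong[OF agree] Uval_cong[OF agree] by (simp_all add: is_Uexp_iff)
  have zero: "?f k = 0" if "length es \<le> k" "k < N" for k
    using that by simp
  have "greedy m ?f N"
    using greedy_zero_digits[OF assms(1) G \<open>length es \<le> N\<close> zero] .
  moreover have "Uval m ?f N = int r"
    using Uval_zero_digits[OF \<open>length es \<le> N\<close> zero] V by simp
  moreover have "?f N = q"
    using \<open>length es \<le> N\<close> by simp
  ultimately have "greedy m ?f (Suc N)" and "int n = Uval m ?f (Suc N)"
    using assms(6) n by (simp_all add: greedy_Suc Uval_Suc)
  then show ?thesis
    using \<open>?f N = q\<close> \<open>0 < q\<close> by (intro is_Uexp_map_upt) auto
qed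

lemma is_Uexp_exists:
  assumes "2 \<le> m"
  shows "\<exists>ds. is_Uexp m ds n"
proof (induction n rule: less_induct)
  case (less n)
  show ?case
  proof (cases "n = 0")
    case True
    then show ?thesis by (auto simp: is_Uexp_iff greedy_def)
  next
    case False
    then obtain N where UN: "seqU m N \<le> int n" and USN: "int n < seqU m (Suc N)"
      using seqU_bracket[OF assms] by (metis less_one not_le)
    define u where "u = nat (seqU m N)"
    have u: "int u = seqU m N" "0 < u"
      using seqU_pos[OF assms, of N] by (auto simp: u_def)
    have "u \<le> n" using u UN by linarith
    then have "0 < n div u" using u by (simp add: div_greater_zero_iff)
    have "n mod u < u" using u by simp
    then obtain es where es: "is_Uexp m es (n mod u)"
      using less.IH \<open>u \<le> n\<close> by (meson less_le_trans)
    have "length es \<le> N"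
      using length_le_of_is_Uexp[OF assms es, of N] \<open>n mod u < u\<close> u by simp
    moreover have "int n = int (n mod u) + int (n div u) * seqU m N"
      unfolding u(1)[symmetric] by (metis mod_div_mult_eq of_nat_add of_nat_mult)
    ultimately show ?thesis
      using is_Uexp_top_digit[OF assms es _ \<open>0 < n div u\<close> _ USN] by blast
  qed
qed

section \<open>Multiplication by alpha\<close>

definition Ufrac :: "real \<Rightarrow> (nat \<Rightarrow> nat) \<Rightarrow> nat \<Rightarrow> real" where
  "Ufrac \<alpha> d N = (\<Sum>k<N. real (d k) * \<alpha> ^ Suc k)"

lemma Ufrac_0 [simp]: "Ufrac \<alpha> d 0 = 0"
  by (simp add: Ufrac_def)

lemma Ufrac_Suc: "Ufrac \<alpha> d (Suc N) = Ufrac \<alpha> d N + real (d N) * \<alpha> ^ Suc N"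
  by (simp add: Ufrac_def)

lemma Ufrac_Suc_shift: "Ufrac \<alpha> d (Suc N) = real (d 0) * \<alpha> + \<alpha> * Ufrac \<alpha> (d \<circ> Suc) N"
  unfolding Ufrac_def sum.lessThan_Suc_shift by (simp add: sum_distrib_left algebra_simps)

lemma Ufrac_nonneg: "0 \<le> \<alpha> \<Longrightarrow> 0 \<le> Ufrac \<alpha> d N"
  unfolding Ufrac_def by (intro sum_nonneg) auto

locale U_alpha =
  fixes m :: nat and \<alpha> :: real
  assumes alpha_quadratic: "\<alpha>\<^sup>2 = real m * \<alpha> - 1"
    and alpha_pos: "0 < \<alpha>"
    and alpha_less_1: "\<alpha> < 1"
begin

lemma m_ge_2: "2 \<le> m"
proof -
  have "\<alpha> < real m * \<alpha>"
    using alpha_quadratic alpha_less_1 zero_le_power2[of \<alpha>] by linarith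
  then have "1 < real m"
    using alpha_pos by (simp add: mult_less_cancel_right2)
  then show ?thesis by linarith
qed

lemma seqU_Suc_times_alpha: "seqU m (Suc k) * \<alpha> = seqU m k + \<alpha> ^ Suc (Suc k)"
proof (induction k rule: induct_nat_012)
  case 0
  then show ?case using alpha_quadratic by (simp add: power2_eq_square)
next
  case 1
  have "(real m * real m - 1) * \<alpha> = real m + \<alpha> * \<alpha> * \<alpha>"
    using alpha_quadratic unfolding power2_eq_square by algebra
  then show ?case by (simp add: power3_eq_cube)
next
  case (ge2 k)
  have "seqU m (Suc (Suc (Suc k))) * \<alpha>
      = real m * (seqU m (Suc (Suc k)) * \<alpha>) - seqU m (Suc k) * \<alpha>"
    by (simp add: algebra_simps)
  also have "\<dots> = seqU m (Suc (Suc k)) + \<alpha> ^ Suc (Suc k) * (real m * \<alpha> - 1)"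
    using ge2 by (simp add: algebra_simps)
  also have "\<dots> = seqU m (Suc (Suc k)) + \<alpha> ^ Suc (Suc (Suc (Suc k)))"
    by (simp flip: alpha_quadratic add: power2_eq_square)
  finally show ?case .
qed

lemma Uval_Suc_times_alpha: "Uval m d (Suc N) * \<alpha> = Uval m (d \<circ> Suc) N + Ufrac \<alpha> d (Suc N)"
proof -
  have "Uval m d (Suc N) * \<alpha> = real (d 0) * \<alpha> + (\<Sum>k<N. real (d (Suc k)) * (seqU m (Suc k) * \<alpha>))"
    unfolding Uval_def sum.lessThan_Suc_shift by (simp add: distrib_right sum_distrib_right mult.assoc)
  also have "\<dots> = Uval m (d \<circ> Suc) N + Ufrac \<alpha> d (Suc N)"
    unfolding seqU_Suc_times_alpha Ufrac_Suc_shift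
    by (simp add: Uval_def Ufrac_def distrib_left sum.distrib sum_distrib_left algebra_simps)
  finally show ?thesis .
qed

lemma Ufrac_Suc_bound:
  assumes IH1: "Ufrac \<alpha> d N \<le> 1 - (1 - \<alpha>) * \<alpha> ^ N"
    and IH2: "0 < N \<Longrightarrow> Uval m d N < seqU m N - seqU m (N - 1) \<Longrightarrow>
                Ufrac \<alpha> d N \<le> 1 - (2 - \<alpha>) * \<alpha> ^ N"
    and V: "Uval m d (Suc N) < seqU m (Suc N) - (int k - 1) * seqU m N"
  shows "Ufrac \<alpha> d (Suc N) \<le> 1 - (real k - \<alpha>) * \<alpha> ^ Suc N"
proof -
  define a where "a = d N"
  define x where "x = \<alpha> ^ N"
  have x: "0 < x" using alpha_pos by (simp add: x_def)
  have aq: "real m * \<alpha> = \<alpha> * \<alpha> + 1" using alpha_quadratic by (simp add: power2_eq_square)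
  have R: "Ufrac \<alpha> d (Suc N) = Ufrac \<alpha> d N + real a * \<alpha> * x"
    by (simp add: Ufrac_Suc a_def x_def)
  have VN: "Uval m d N + int a * seqU m N < seqU m (Suc N) - (int k - 1) * seqU m N"
    using V by (simp add: Uval_Suc a_def)
  have "a + k \<le> m"
    using top_digit_le[OF m_ge_2 V] by (simp add: a_def)
  have IH1': "Ufrac \<alpha> d N \<le> 1 - (1 - \<alpha>) * x"
    using IH1 by (simp add: x_def)
  consider (small) "a + k < m" | (top_0) "a + k = m" "N = 0" | (top) "a + k = m" "0 < N"
    using \<open>a + k \<le> m\<close> by linarith
  then have "Ufrac \<alpha> d (Suc N) \<le> 1 - (real k - \<alpha>) * (\<alpha> * x)"
  proof cases
    case small
    then have "real a * \<alpha> * x \<le> (real m - real k - 1) * \<alpha> * x"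
      using alpha_pos x by (intro mult_right_mono) auto
    moreover have "1 - (1 - \<alpha>) * x + (real m - real k - 1) * \<alpha> * x = 1 - (real k - \<alpha>) * (\<alpha> * x)"
      using aq by algebra
    ultimately show ?thesis using IH1' R by linarith
  next
    case top_0
    then have "real a = real m - real k" "x = 1" by (simp_all add: x_def)
    then have "real a * \<alpha> * x = 1 - (real k - \<alpha>) * (\<alpha> * x)"
      using aq by algebra
    then show ?thesis using R top_0 by simp
  next
    case top
    then have "Uval m d N < seqU m N - seqU m (N - 1)"
      using VN by (cases N) (auto simp: algebra_simps)
    then have "Ufrac \<alpha> d N \<le> 1 - (2 - \<alpha>) * x" using IH2 top by (simp add: x_def)
    moreover have "real a = real m - real k" using top by simp
    then have "1 - (2 - \<alpha>) * x + real a * \<alpha> * x = 1 - (real k - \<alpha>) * (\<alpha> * x) + (\<alpha> - 1) * x"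
      using aq by algebra
    moreover have "(\<alpha> - 1) * x \<le> 0" using alpha_less_1 x by (simp add: mult_nonpos_nonneg)
    ultimately show ?thesis using R by linarith
  qed
  then show ?thesis by (simp add: x_def)
qed

text \<open>The second bound is needed when the top digit is as large as greediness allows: the
  digits below it then satisfy the tighter constraint Uval < U_N - U_(N-1).\<close>

lemma greedy_Ufrac_bound:
  "greedy m d N \<Longrightarrow> Ufrac \<alpha> d N \<le> 1 - (1 - \<alpha>) * \<alpha> ^ N \<and>
     (0 < N \<longrightarrow> Uval m d N < seqU m N - seqU m (N - 1) \<longrightarrow> Ufrac \<alpha> d N \<le> 1 - (2 - \<alpha>) * \<alpha> ^ N)"
proof (induction N)
  case 0
  then show ?case using alpha_pos by simp
next
  case (Suc N)
  then have IH: "Ufrac \<alpha> d N \<le> 1 - (1 - \<alpha>) * \<alpha> ^ N"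
      "0 < N \<Longrightarrow> Uval m d N < seqU m N - seqU m (N - 1) \<Longrightarrow> Ufrac \<alpha> d N \<le> 1 - (2 - \<alpha>) * \<alpha> ^ N"
    by (simp_all add: greedy_Suc)
  have "Uval m d (Suc N) < seqU m (Suc N) - (int 1 - 1) * seqU m N"
    using Suc.prems by (simp add: greedy_Suc)
  from Ufrac_Suc_bound[OF IH this] have "Ufrac \<alpha> d (Suc N) \<le> 1 - (1 - \<alpha>) * \<alpha> ^ Suc N"
    by simp
  moreover have "Ufrac \<alpha> d (Suc N) \<le> 1 - (2 - \<alpha>) * \<alpha> ^ Suc N"
    if "Uval m d (Suc N) < seqU m (Suc N) - seqU m N"
    using Ufrac_Suc_bound[OF IH, of 2] that by simp
  ultimately show ?case by simp
qed

lemma greedy_Ufrac_less_1: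
  assumes "greedy m d N"
  shows "Ufrac \<alpha> d N < 1"
proof -
  have "0 < (1 - \<alpha>) * \<alpha> ^ N"
    using alpha_pos alpha_less_1 by simp
  then show ?thesis
    using greedy_Ufrac_bound[OF assms] by linarith
qed

lemma greedy_floor_frac:
  assumes "greedy m d (Suc N)"
  shows "\<lfloor>Uval m d (Suc N) * \<alpha>\<rfloor> = Uval m (d \<circ> Suc) N"
    and "frac (Uval m d (Suc N) * \<alpha>) = Ufrac \<alpha> d (Suc N)"
proof -
  have "0 \<le> Ufrac \<alpha> d (Suc N)" "Ufrac \<alpha> d (Suc N) < 1"
    using Ufrac_nonneg alpha_pos greedy_Ufrac_less_1[OF assms] by auto
  then show floor: "\<lfloor>Uval m d (Suc N) * \<alpha>\<rfloor> = Uval m (d \<circ> Suc) N"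
    unfolding Uval_Suc_times_alpha by (intro floor_unique) auto
  show "frac (Uval m d (Suc N) * \<alpha>) = Ufrac \<alpha> d (Suc N)"
    unfolding frac_def floor by (simp add: Uval_Suc_times_alpha)
qed


lemma greedy_shift:
  assumes "greedy m d (Suc N)"
  shows "greedy m (d \<circ> Suc) N"
  unfolding greedy_def
proof (intro allI impI)
  fix i assume "i < N"
  then have "Uval m d (Suc (Suc i)) < seqU m (Suc (Suc i))"
    using assms unfolding greedy_def by (meson Suc_mono)
  then have "Uval m d (Suc (Suc i)) * \<alpha> \<le> (seqU m (Suc (Suc i)) - 1) * \<alpha>"
    using alpha_pos by (intro mult_right_mono) (simp_all flip: of_int_diff)
  also have "\<dots> = seqU m (Suc i) + \<alpha> ^ Suc (Suc (Suc i)) - \<alpha>"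
    by (simp only: of_int_diff of_int_1 left_diff_distrib seqU_Suc_times_alpha mult_1)
  also have "\<dots> < seqU m (Suc i)"
    using alpha_pos alpha_less_1 power_strict_decreasing[of 1 "Suc (Suc (Suc i))" \<alpha>] by simp
  finally have "Uval m (d \<circ> Suc) (Suc i) + Ufrac \<alpha> d (Suc (Suc i)) < seqU m (Suc i)"
    by (simp only: Uval_Suc_times_alpha)
  moreover have "0 \<le> Ufrac \<alpha> d (Suc (Suc i))"
    using alpha_pos by (simp add: Ufrac_nonneg)
  ultimately show "Uval m (d \<circ> Suc) (Suc i) < seqU m (Suc i)" by linarith
qed

lemma is_Uexp_Cons:
  assumes "is_Uexp m (x # es) n"
  shows "is_Uexp m es (nat \<lfloor>real n * \<alpha>\<rfloor>)"
    and "frac (real n * \<alpha>) = Ufrac \<alpha> (nth (x # es)) (Suc (length es))"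
proof -
  have shift: "nth (x # es) \<circ> Suc = nth es" by (simp add: fun_eq_iff)
  have "int n = Uval m (nth (x # es)) (Suc (length es))"
    and G: "greedy m (nth (x # es)) (Suc (length es))"
    using assms by (simp_all add: is_Uexp_iff)
  then have n: "real n = Uval m (nth (x # es)) (Suc (length es))"
    by (metis of_int_of_nat_eq)
  show "frac (real n * \<alpha>) = Ufrac \<alpha> (nth (x # es)) (Suc (length es))"
    unfolding n by (rule greedy_floor_frac(2)[OF G])
  have "\<lfloor>real n * \<alpha>\<rfloor> = Uval m (nth es) (length es)"
    unfolding n greedy_floor_frac(1)[OF G] shift ..
  moreover have "greedy m (nth es) (length es)"
    using greedy_shift[OF G] by (simp only: shift)
  moreover have "es \<noteq> [] \<Longrightarrow> last es \<noteq> 0"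
    using assms by (simp add: is_Uexp_iff)
  ultimately show "is_Uexp m es (nat \<lfloor>real n * \<alpha>\<rfloor>)"
    using Uval_nonneg[OF m_ge_2] by (simp add: is_Uexp_iff)
qed

lemma is_Uexp_tl:
  assumes "is_Uexp m ds n"
  shows "is_Uexp m (tl ds) (nat \<lfloor>real n * \<alpha>\<rfloor>)"
proof (cases ds)
  case Nil
  then show ?thesis using assms by (simp add: is_Uexp_iff)
next
  case (Cons x es)
  then show ?thesis using is_Uexp_Cons(1) assms by simp
qed

lemma is_Uexp_unique: "is_Uexp m ds n \<Longrightarrow> is_Uexp m es n \<Longrightarrow> ds = es"
proof (induction n arbitrary: ds es rule: less_induct)
  case (less n)
  show ?case
  proof (cases "n = 0")
    case True
    then show ?thesis using is_Uexp_Nil_iff[OF m_ge_2] less.prems by blast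
  next
    case False
    then obtain x xs y ys where ds: "ds = x # xs" and es: "es = y # ys"
      using is_Uexp_Nil_iff[OF m_ge_2] less.prems by (metis list.exhaust)
    have "nat \<lfloor>real n * \<alpha>\<rfloor> < n"
      using False alpha_less_1 alpha_pos by (simp add: nat_less_iff floor_less_iff)
    then have "xs = ys"
      using less.IH is_Uexp_tl less.prems by (metis ds es list.sel(3))
    moreover have "Uval m (nth (x # xs)) (Suc (length xs)) = Uval m (nth (y # xs)) (Suc (length xs))"
      using less.prems ds es \<open>xs = ys\<close> by (simp add: is_Uexp_iff)
    then have "x = y"
      unfolding Uval_def sum.lessThan_Suc_shift by simp
    ultimately show ?thesis using ds es by simp
  qed
qed

lemma Uexp_eqI: "is_Uexp m ds n \<Longrightarrow> Uexp m n = ds"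
  unfolding Uexp_def using is_Uexp_unique by blast

lemma is_Uexp_Uexp: "is_Uexp m (Uexp m n) n"
  using is_Uexp_exists[OF m_ge_2] Uexp_eqI by metis

lemma tl_Uexp: "tl (Uexp m n) = Uexp m (nat \<lfloor>real n * \<alpha>\<rfloor>)"
  using Uexp_eqI[OF is_Uexp_tl[OF is_Uexp_Uexp]] by (rule sym)

lemma hd_Uexp_eq_0_iff:
  assumes "1 \<le> n"
  shows "hd (Uexp m n) = 0 \<longleftrightarrow> frac (real n * \<alpha>) < \<alpha>"
proof -
  obtain x es where U: "Uexp m n = x # es"
    using is_Uexp_Nil_iff[OF m_ge_2 is_Uexp_Uexp] assms by (metis list.exhaust not_one_le_zero)
  then have E: "is_Uexp m (x # es) n" using is_Uexp_Uexp by metis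
  define R where "R = Ufrac \<alpha> (nth es) (length es)"
  have frac: "frac (real n * \<alpha>) = real x * \<alpha> + \<alpha> * R"
    using is_Uexp_Cons(2)[OF E] by (simp add: Ufrac_Suc_shift comp_def R_def)
  have "0 \<le> R" "R < 1"
    using alpha_pos Ufrac_nonneg greedy_Ufrac_less_1 is_Uexp_Cons(1)[OF E]
    by (auto simp: is_Uexp_iff R_def)
  then have "0 \<le> \<alpha> * R" "\<alpha> * R < \<alpha>"
    using alpha_pos by simp_all
  show ?thesis
  proof (cases "x = 0")
    case True
    then show ?thesis using U frac \<open>\<alpha> * R < \<alpha>\<close> by simp
  next
    case False
    then have "\<alpha> \<le> real x * \<alpha>" using alpha_pos by simp
    then show ?thesis using U frac \<open>0 \<le> \<alpha> * R\<close> False by simp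
  qed
qed

end

section \<open>The counting function Pa\<close>

lemma frac_Suc_times:
  assumes "0 < \<alpha>" and "\<alpha> < 1"
  shows "frac (real (Suc j) * \<alpha>) = frac (real j * \<alpha>) + \<alpha> - of_bool (1 \<le> frac (real j * \<alpha>) + \<alpha>)"
proof -
  have "real (Suc j) * \<alpha> = real j * \<alpha> + \<alpha>" by (simp add: algebra_simps)
  then show ?thesis using frac_add[of "real j * \<alpha>" \<alpha>] assms by (simp add: frac_eq)
qed

lemma floor_Suc_times:
  assumes "0 < \<alpha>" and "\<alpha> < 1"
  shows "\<lfloor>real (Suc j) * \<alpha>\<rfloor> = \<lfloor>real j * \<alpha>\<rfloor> + of_bool (1 \<le> frac (real j * \<alpha>) + \<alpha>)"
proof -
  have "real (Suc j) * \<alpha> = real j * \<alpha> + \<alpha>" by (simp add: algebra_simps)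
  moreover have "\<lfloor>\<alpha>\<rfloor> = 0" "frac \<alpha> = \<alpha>" using assms by (simp_all add: floor_eq_iff frac_eq)
  ultimately show ?thesis using floor_add[of "real j * \<alpha>" \<alpha>] by simp
qed

lemma sum_carry_eq_floor:
  assumes "0 < \<alpha>" and "\<alpha> < 1"
  shows "(\<Sum>j\<le>n. of_bool (1 \<le> frac (real j * \<alpha>) + \<alpha>)) = \<lfloor>real (Suc n) * \<alpha>\<rfloor>"
proof -
  have "(\<Sum>j\<le>n. of_bool (1 \<le> frac (real j * \<alpha>) + \<alpha>))
      = (\<Sum>j<Suc n. \<lfloor>real (Suc j) * \<alpha>\<rfloor> - \<lfloor>real j * \<alpha>\<rfloor>)"
    using floor_Suc_times[OF assms] by (simp add: lessThan_Suc_atMost)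
  also have "\<dots> = \<lfloor>real (Suc n) * \<alpha>\<rfloor>"
    by (subst sum_lessThan_telescope) simp
  finally show ?thesis .
qed

lemma of_bool_frac_Suc_le:
  assumes "0 < \<alpha>" and "\<alpha> < 1"
  shows "(of_bool (frac (real (Suc j) * \<alpha>) \<le> frac (real (Suc n) * \<alpha>)) :: int)
    = of_bool (frac (real j * \<alpha>) \<le> frac (real n * \<alpha>)) + of_bool (1 \<le> frac (real j * \<alpha>) + \<alpha>)
      - of_bool (1 \<le> frac (real n * \<alpha>) + \<alpha>)"
  using frac_lt_1[of "real j * \<alpha>"] frac_lt_1[of "real n * \<alpha>"]
    frac_ge_0[of "real j * \<alpha>"] frac_ge_0[of "real n * \<alpha>"]
  unfolding frac_Suc_times[OF assms] by (auto simp: of_bool_def simp del: frac_ge_0)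

lemma of_nat_Pa_eq_sum: "int (Pa \<alpha> n) = (\<Sum>k=1..n. of_bool (frac (real k * \<alpha>) \<le> frac (real n * \<alpha>)))"
proof -
  have "{k \<in> {1..n}. frac (real k * \<alpha>) \<le> frac (real n * \<alpha>)}
      = {1..n} \<inter> {k. frac (real k * \<alpha>) \<le> frac (real n * \<alpha>)}"
    by blast
  then show ?thesis by (simp add: Pa_def)
qed

lemma Pa_Suc_diff:
  assumes "0 < \<alpha>" and "\<alpha> < 1"
  shows "int (Pa \<alpha> (Suc n)) - int (Pa \<alpha> n)
    = 1 + \<lfloor>real n * \<alpha>\<rfloor> - int n * of_bool (1 \<le> frac (real n * \<alpha>) + \<alpha>)"
proof -
  let ?le = "\<lambda>j. of_bool (frac (real j * \<alpha>) \<le> frac (real n * \<alpha>)) :: int"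
  let ?carry = "\<lambda>j. of_bool (1 \<le> frac (real j * \<alpha>) + \<alpha>) :: int"
  have "int (Pa \<alpha> (Suc n))
      = (\<Sum>j=0..n. of_bool (frac (real (Suc j) * \<alpha>) \<le> frac (real (Suc n) * \<alpha>)))"
    unfolding of_nat_Pa_eq_sum One_nat_def sum.shift_bounds_cl_Suc_ivl ..
  also have "\<dots> = (\<Sum>j=0..n. ?le j + ?carry j - ?carry n)"
    using of_bool_frac_Suc_le[OF assms] by simp
  also have "\<dots> = (\<Sum>j=0..n. ?le j) + (\<Sum>j\<le>n. ?carry j) - (int n + 1) * ?carry n"
    by (simp add: sum.distrib sum_subtractf atLeast0AtMost)
  also have "(\<Sum>j=0..n. ?le j) = ?le 0 + (\<Sum>j=1..n. ?le j)"
    unfolding One_nat_def by (rule sum.atLeast_Suc_atMost) simp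
  also have "\<dots> = 1 + int (Pa \<alpha> n)"
    unfolding of_nat_Pa_eq_sum by simp
  also have "(\<Sum>j\<le>n. ?carry j) = \<lfloor>real n * \<alpha>\<rfloor> + ?carry n"
    using sum_carry_eq_floor[OF assms] floor_Suc_times[OF assms] by simp
  finally show ?thesis by (simp add: algebra_simps)
qed

lemma U_alpha_reciprocal:
  assumes "3 \<le> m" and "\<beta> = (real m + sqrt (real m ^ 2 - 4)) / 2" and "\<alpha> = 1 / \<beta>"
  shows "U_alpha m \<alpha>"
proof
  define s where "s = sqrt (real m ^ 2 - 4)"
  have "3 ^ 2 \<le> real m ^ 2" using assms(1) by (intro power_mono) auto
  then have "s\<^sup>2 = real m ^ 2 - 4" "0 \<le> s" by (simp_all add: s_def)
  moreover have "\<beta> = (real m + s) / 2" using assms(2) by (simp add: s_def)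
  ultimately have "1 < \<beta>" "\<beta>\<^sup>2 = real m * \<beta> - 1"
    using assms(1) unfolding power2_eq_square by (simp, algebra)
  then show "0 < \<alpha>" "\<alpha> < 1" "\<alpha>\<^sup>2 = real m * \<alpha> - 1"
    unfolding assms(3) by (simp_all add: power2_eq_square field_simps)
qed

theorem corollary1:
  fixes m n :: nat and \<alpha> \<beta> :: real
  assumes "m \<ge> 3"
    and "\<beta> = (real m + sqrt (real m ^ 2 - 4)) / 2"
    and "\<alpha> = 1 / \<beta>"
    and "n \<ge> 1"
  defines "\<Delta>P \<equiv> int (Pa \<alpha> (n + 1)) - int (Pa \<alpha> n)"
  shows "(hd (Uexp m (n + 1)) = 0 \<longrightarrow>
            int n + \<Delta>P - 1 \<ge> 0 \<and> tl (Uexp m n) = Uexp m (nat (int n + \<Delta>P - 1)))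
       \<and> (hd (Uexp m (n + 1)) \<noteq> 0 \<longrightarrow>
            \<Delta>P - 1 \<ge> 0 \<and> tl (Uexp m n) = Uexp m (nat (\<Delta>P - 1)))"
proof -
  interpret U_alpha m \<alpha>
    using U_alpha_reciprocal assms(1-3) .
  define carry where "carry \<longleftrightarrow> 1 \<le> frac (real n * \<alpha>) + \<alpha>"
  have "\<lfloor>real n * \<alpha>\<rfloor> = \<Delta>P - 1 + int n * of_bool carry"
    using Pa_Suc_diff[OF alpha_pos alpha_less_1, of n] by (simp add: \<Delta>P_def carry_def)
  then have floor: "carry \<Longrightarrow> int n + \<Delta>P - 1 = \<lfloor>real n * \<alpha>\<rfloor>"
    "\<not> carry \<Longrightarrow> \<Delta>P - 1 = \<lfloor>real n * \<alpha>\<rfloor>"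
    by simp_all
  have "frac (real (Suc n) * \<alpha>) < \<alpha> \<longleftrightarrow> carry"
    using frac_Suc_times[OF alpha_pos alpha_less_1, of n] frac_lt_1[of "real n * \<alpha>"]
      frac_ge_0[of "real n * \<alpha>"]
    by (auto simp: carry_def simp del: frac_ge_0)
  then have "hd (Uexp m (n + 1)) = 0 \<longleftrightarrow> carry"
    using hd_Uexp_eq_0_iff[of "n + 1"] by simp
  moreover have "0 \<le> \<lfloor>real n * \<alpha>\<rfloor>"
    using alpha_pos by simp
  ultimately show ?thesis
    using tl_Uexp[of n] floor by auto
qed

end
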